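(* Let $\Sigma\subset\mathbb C^n$ be a smooth hypersurface bounding a compact domain, and $Z$ a vector field defined near $\Sigma$ such that $iZ$ is tangent to $\Sigma$. Let $\xi_{\mathbb C}=T\Sigma\cap iT\Sigma$ and let $\beta\in\Omega^1(\Sigma)$ be the one-form with $\ker\beta=\xi_{\mathbb C}$ and $\beta(iZ|_\Sigma)=1$. Assume $\Sigma$ is strictly $i$-convex, i.e. $d\beta(v,iv)>0$ for all nonzero $v\in\xi_{\mathbb C}$, so that $\beta$ is a contact form with Reeb vector field $R_\beta$. If $Z$ is a holomorphic vector field, then $R_\beta=iZ$ on $\Sigma$.
   Context: $i$ denotes the standard complex structure on $\mathbb C^n$. The Reeb vector field $R_\beta$ is characterized by $d\beta(R_\beta,\cdot)=0$ and $\beta(R_\beta)=1$. A holomorphic vector field is one whose flow acts by (local) biholomorphisms. *)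

theory Defs
  imports "HOL-Analysis.Analysis"
begin

text \<open>In finite dimensions, continuity of all directional derivatives x -> f' x v is
  equivalent to continuity of the Frechet derivative.\<close>
fun Ck_on :: "nat \<Rightarrow> 'a::real_normed_vector set \<Rightarrow> ('a \<Rightarrow> 'b::real_normed_vector) \<Rightarrow> bool" where
  "Ck_on 0 U f = continuous_on U f"
| "Ck_on (Suc k) U f = (\<exists>f'. (\<forall>x\<in>U. (f has_derivative f' x) (at x)) \<and> (\<forall>v. Ck_on k U (\<lambda>x. f' x v)))"

definition smooth_on :: "'a::real_normed_vector set \<Rightarrow> ('a \<Rightarrow> 'b::real_normed_vector) \<Rightarrow> bool" where
  "smooth_on U f \<longleftrightarrow> (\<forall>k. Ck_on k U f)"

definition cmul_i :: "complex ^ 'n \<Rightarrow> complex ^ 'n" where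
  "cmul_i v = (\<chi> k. \<i> * v $ k)"

definition tangent_sp :: "(complex ^ 'n \<Rightarrow> real) \<Rightarrow> complex ^ 'n \<Rightarrow> (complex ^ 'n) set" where
  "tangent_sp \<rho> p = {v. frechet_derivative \<rho> (at p) v = 0}"

definition cx_tangent :: "(complex ^ 'n \<Rightarrow> real) \<Rightarrow> complex ^ 'n \<Rightarrow> (complex ^ 'n) set" where
  "cx_tangent \<rho> p = {v. v \<in> tangent_sp \<rho> p \<and> cmul_i v \<in> tangent_sp \<rho> p}"

text \<open>Exterior derivative of a 1-form B (given as p -> linear functional):
  dB_p(v,w) = D(B(.) w)_p v - D(B(.) v)_p w (constant vector fields v, w).\<close>
definition d_form :: "(complex ^ 'n \<Rightarrow> complex ^ 'n \<Rightarrow> real) \<Rightarrow> complex ^ 'n \<Rightarrow> complex ^ 'n \<Rightarrow> complex ^ 'n \<Rightarrow> real" where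
  "d_form B p v w = frechet_derivative (\<lambda>q. B q w) (at p) v - frechet_derivative (\<lambda>q. B q v) (at p) w"

definition holomorphic_vf :: "(complex ^ 'n) set \<Rightarrow> (complex ^ 'n \<Rightarrow> complex ^ 'n) \<Rightarrow> bool" where
  "holomorphic_vf U Z \<longleftrightarrow> (\<forall>p\<in>U. Z differentiable (at p) \<and>
      (\<forall>v. frechet_derivative Z (at p) (cmul_i v) = cmul_i (frechet_derivative Z (at p) v)))"

definition reeb_at :: "(complex ^ 'n \<Rightarrow> real) \<Rightarrow> (complex ^ 'n \<Rightarrow> complex ^ 'n \<Rightarrow> real) \<Rightarrow> complex ^ 'n \<Rightarrow> complex ^ 'n \<Rightarrow> bool" where
  "reeb_at \<rho> B p R \<longleftrightarrow> R \<in> tangent_sp \<rho> p \<and> B p R = 1 \<and> (\<forall>v\<in>tangent_sp \<rho> p. d_form B p R v = 0)"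

end

theory Submission
  imports Defs
begin

(* Write X = iZ and extend a complex tangency v at p to a field W of complex tangencies along
   the hypersurface. Differentiating beta(W) = 0 and beta(X) = 1 along the hypersurface gives
   d beta(X, v) = - beta([X, W]). Brackets of fields tangent to a level set of rho are tangent
   (the Hessian of rho is symmetric), and since Z is holomorphic, i [X, W] = [X, iW] is such a
   bracket too; hence [X, W] is a complex tangency and beta kills it. So d beta(X, .) vanishes
   on the complex tangencies and on X itself, i.e. X is the Reeb field. Any other Reeb field
   differs from X by a complex tangency w with d beta(w, iw) = 0, so w = 0 by strict
   i-convexity. *)

lemma has_field_derivative_along_line:
  fixes f :: "'a::real_normed_vector \<Rightarrow> real"
  assumes "(f has_derivative F) (at (x + s *\<^sub>R a))"
  shows "((\<lambda>s. f (x + s *\<^sub>R a)) has_field_derivative F a) (at s)"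
proof -
  have "((\<lambda>s. x + s *\<^sub>R a) has_derivative (\<lambda>h. h *\<^sub>R a)) (at s)"
    by (auto intro!: derivative_eq_intros)
  from has_derivative_compose[OF this assms]
  have "((\<lambda>s. f (x + s *\<^sub>R a)) has_derivative (\<lambda>h. F (h *\<^sub>R a))) (at s)" .
  moreover have "(\<lambda>h. F (h *\<^sub>R a)) = (*) (F a)"
    using linear_cmul[OF has_derivative_linear[OF assms]] by auto
  ultimately show ?thesis by (simp add: has_field_derivative_def)
qed

lemma tendsto_difference_quotient_at_right:
  fixes f :: "'a::real_normed_vector \<Rightarrow> real"
  assumes "(f has_derivative L) (at p)"
  shows "((\<lambda>t. (f (p + t *\<^sub>R w) - f p) / t) \<longlongrightarrow> L w) (at_right 0)"
proof -
  have "((\<lambda>t. f (p + t *\<^sub>R w)) has_field_derivative L w) (at 0)"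
    using has_field_derivative_along_line[of f L p 0 w] assms by simp
  then show ?thesis by (auto simp: has_field_derivative_iff intro: tendsto_mono at_le)
qed

lemma eventually_sign_change_across_level_set:
  fixes \<rho> :: "'a::real_normed_vector \<Rightarrow> real"
  assumes \<rho>_deriv: "(\<rho> has_derivative L) (at p)" and "\<rho> p = 0" "L v = 0" "L N > 0" "\<epsilon> > 0"
  shows "\<forall>\<^sub>F t in at_right 0. \<rho> (p + t *\<^sub>R (v - \<epsilon> *\<^sub>R N)) < 0 \<and> 0 < \<rho> (p + t *\<^sub>R (v + \<epsilon> *\<^sub>R N))"
proof -
  have slope: "((\<lambda>t. \<rho> (p + t *\<^sub>R w) / t) \<longlongrightarrow> L w) (at_right 0)" for w
    using tendsto_difference_quotient_at_right[OF \<rho>_deriv] \<open>\<rho> p = 0\<close> by simp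
  have lin: "linear L" using \<rho>_deriv by (rule has_derivative_linear)
  have "L (v - \<epsilon> *\<^sub>R N) < 0" "L (v + \<epsilon> *\<^sub>R N) > 0"
    using assms(3-5) by (simp_all add: linear_add[OF lin] linear_diff[OF lin] linear_cmul[OF lin])
  then have "\<forall>\<^sub>F t in at_right 0. \<rho> (p + t *\<^sub>R (v - \<epsilon> *\<^sub>R N)) / t < 0"
    and "\<forall>\<^sub>F t in at_right 0. \<rho> (p + t *\<^sub>R (v + \<epsilon> *\<^sub>R N)) / t > 0"
    using order_tendstoD[OF slope] by blast+
  then show ?thesis
    using eventually_at_right_less[of 0]
    by eventually_elim (simp add: divide_less_0_iff zero_less_divide_iff)
qed

lemma level_set_meets_cone:
  fixes \<rho> :: "'a::real_normed_vector \<Rightarrow> real"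
  assumes "open U" "p \<in> U" and \<rho>_cont: "continuous_on U \<rho>" and "\<rho> p = 0"
    and "(\<rho> has_derivative L) (at p)" and "L v = 0" "L N > 0"
    and "\<epsilon> > 0" "\<delta> > 0"
  shows "\<exists>t s. 0 < t \<and> t < \<delta> \<and> \<bar>s\<bar> \<le> \<epsilon> * t \<and>
           p + (t *\<^sub>R v + s *\<^sub>R N) \<in> U \<and> \<rho> (p + (t *\<^sub>R v + s *\<^sub>R N)) = 0"
proof -
  obtain d where "d > 0" "ball p d \<subseteq> U"
    using assms(1,2) open_contains_ball by blast
  define K where "K = norm v + \<epsilon> * norm N"
  have "K \<ge> 0" using \<open>\<epsilon> > 0\<close> by (simp add: K_def)
  have "\<forall>\<^sub>F t in at_right 0. t < min \<delta> (d / (K + 1))"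
    using \<open>\<delta> > 0\<close> \<open>d > 0\<close> \<open>K \<ge> 0\<close>
    by (auto simp: eventually_at_right_field intro!: exI[of _ "min \<delta> (d / (K + 1))"])
  then have "\<forall>\<^sub>F t in at_right 0. 0 < t \<and> t < min \<delta> (d / (K + 1)) \<and>
      \<rho> (p + t *\<^sub>R (v - \<epsilon> *\<^sub>R N)) < 0 \<and> 0 < \<rho> (p + t *\<^sub>R (v + \<epsilon> *\<^sub>R N))"
    using eventually_at_right_less[of 0] eventually_sign_change_across_level_set[OF assms(5,4,6-8)]
    by eventually_elim auto
  then obtain t where t: "t > 0" "t < \<delta>" "t < d / (K + 1)"
      and neg: "\<rho> (p + t *\<^sub>R (v - \<epsilon> *\<^sub>R N)) < 0"
      and pos: "0 < \<rho> (p + t *\<^sub>R (v + \<epsilon> *\<^sub>R N))"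
    using eventually_happens'[OF trivial_limit_at_right_real] by auto
  define g where "g s = \<rho> (p + (t *\<^sub>R v + s *\<^sub>R N))" for s
  have in_U: "p + (t *\<^sub>R v + s *\<^sub>R N) \<in> U" if "\<bar>s\<bar> \<le> \<epsilon> * t" for s
  proof -
    have "norm (t *\<^sub>R v + s *\<^sub>R N) \<le> t * norm v + \<bar>s\<bar> * norm N"
      using norm_triangle_ineq[of "t *\<^sub>R v" "s *\<^sub>R N"] t by simp
    also have "\<dots> \<le> t * K"
      using mult_right_mono[OF that, of "norm N"] by (simp add: K_def algebra_simps)
    also have "\<dots> < d" using t \<open>K \<ge> 0\<close> by (simp add: field_simps)
    finally have "p + (t *\<^sub>R v + s *\<^sub>R N) \<in> ball p d"
      by (metis add.right_neutral dist_0_norm dist_add_cancel mem_ball)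
    then show ?thesis using \<open>ball p d \<subseteq> U\<close> by blast
  qed
  have "g (- (\<epsilon> * t)) \<le> 0" "0 \<le> g (\<epsilon> * t)"
    using pos neg by (simp_all add: g_def algebra_simps)
  moreover have "continuous_on {- (\<epsilon> * t) .. \<epsilon> * t} g"
    unfolding g_def using in_U
    by (intro continuous_on_compose2[OF \<rho>_cont] continuous_intros) auto
  ultimately obtain s where "- (\<epsilon> * t) \<le> s" "s \<le> \<epsilon> * t" "g s = 0"
    using IVT'[of g "- (\<epsilon> * t)" 0 "\<epsilon> * t"] t \<open>\<epsilon> > 0\<close> by auto
  then show ?thesis
    using t in_U[of s] by (intro exI[of _ t] exI[of _ s]) (auto simp: g_def)
qed

lemma constant_on_level_set_derivative_bound:
  fixes \<rho> \<phi> :: "'a::real_normed_vector \<Rightarrow> real"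
  assumes "open U" "p \<in> U" "continuous_on U \<rho>" "\<rho> p = 0"
    and "(\<rho> has_derivative L) (at p)" "L v = 0" "L N > 0"
    and \<phi>_deriv: "(\<phi> has_derivative M) (at p)"
    and "r > 0" and \<phi>_const: "\<And>q. q \<in> U \<Longrightarrow> dist q p < r \<Longrightarrow> \<rho> q = 0 \<Longrightarrow> \<phi> q = \<phi> p"
    and "e > 0"
  shows "\<bar>M v\<bar> \<le> e * (\<bar>M N\<bar> + norm v + e * norm N)"
proof -
  have linM: "linear M" using \<phi>_deriv by (rule has_derivative_linear)
  define K where "K = norm v + e * norm N"
  have "K \<ge> 0" using \<open>e > 0\<close> by (simp add: K_def)
  obtain d where "d > 0"
    and d: "\<And>y. norm (y - p) < d \<Longrightarrow> \<bar>\<phi> y - \<phi> p - M (y - p)\<bar> \<le> e * norm (y - p)"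
    using \<phi>_deriv \<open>e > 0\<close> unfolding has_derivative_at_alt by force
  obtain t s where t: "0 < t" "t < min r d / (K + 1)" and s: "\<bar>s\<bar> \<le> e * t"
      and q: "p + (t *\<^sub>R v + s *\<^sub>R N) \<in> U" "\<rho> (p + (t *\<^sub>R v + s *\<^sub>R N)) = 0"
    using level_set_meets_cone[OF assms(1-7) \<open>e > 0\<close>, of "min r d / (K + 1)"]
      \<open>r > 0\<close> \<open>d > 0\<close> \<open>K \<ge> 0\<close> by auto
  define h where "h = t *\<^sub>R v + s *\<^sub>R N"
  have "norm h \<le> t * norm v + \<bar>s\<bar> * norm N"
    using norm_triangle_ineq[of "t *\<^sub>R v" "s *\<^sub>R N"] t by (simp add: h_def)
  also have "\<dots> \<le> t * K"
    using mult_right_mono[OF s, of "norm N"] by (simp add: K_def algebra_simps)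
  finally have h_le: "norm h \<le> t * K" .
  also have "\<dots> < min r d" using t \<open>K \<ge> 0\<close> by (simp add: field_simps)
  finally have "norm h < r" "norm h < d" by auto
  then have "\<phi> (p + h) = \<phi> p" "\<bar>\<phi> (p + h) - \<phi> p - M h\<bar> \<le> e * norm h"
    using \<phi>_const[of "p + h"] d[of "p + h"] q by (auto simp: h_def dist_norm)
  then have "\<bar>M h\<bar> \<le> e * (t * K)"
    using mult_left_mono[OF h_le, of e] \<open>e > 0\<close> by linarith
  then have "\<bar>t * M v + s * M N\<bar> \<le> e * (t * K)"
    by (simp add: h_def linear_add[OF linM] linear_cmul[OF linM])
  moreover have "\<bar>s * M N\<bar> \<le> e * t * \<bar>M N\<bar>"
    using mult_right_mono[OF s, of "\<bar>M N\<bar>"] by (simp add: abs_mult)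
  ultimately have "t * \<bar>M v\<bar> \<le> t * (e * (\<bar>M N\<bar> + K))"
    using abs_triangle_ineq4[of "t * M v + s * M N" "s * M N"] t
    by (simp add: abs_mult algebra_simps)
  then show ?thesis using t by (simp add: K_def add.assoc)
qed

lemma constant_on_level_set_derivative_zero:
  fixes \<rho> \<phi> :: "'a::real_normed_vector \<Rightarrow> real"
  assumes "open U" "p \<in> U" "continuous_on U \<rho>" "\<rho> p = 0"
    and \<rho>_deriv: "(\<rho> has_derivative L) (at p)" and "L v = 0" "L N \<noteq> 0"
    and "(\<phi> has_derivative M) (at p)"
    and "r > 0" "\<And>q. q \<in> U \<Longrightarrow> dist q p < r \<Longrightarrow> \<rho> q = 0 \<Longrightarrow> \<phi> q = \<phi> p"
  shows "M v = 0"
proof -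
  obtain N' where N': "L N' > 0"
  proof (cases "L N > 0")
    case False
    then have "L (- N) > 0"
      using \<open>L N \<noteq> 0\<close> linear_neg[OF has_derivative_linear[OF \<rho>_deriv], of N] by simp
    then show ?thesis by (rule that)
  qed (rule that)
  have "((\<lambda>e. e * (\<bar>M N'\<bar> + norm v + e * norm N')) \<longlongrightarrow> 0) (at_right 0)"
    by (rule tendsto_eq_intros refl | simp)+
  moreover have "\<forall>\<^sub>F e in at_right 0. \<bar>M v\<bar> \<le> e * (\<bar>M N'\<bar> + norm v + e * norm N')"
    using eventually_at_right_less[of 0] by (rule eventually_mono)
      (rule constant_on_level_set_derivative_bound[OF assms(1-6) N' assms(8-10)])
  ultimately have "\<bar>M v\<bar> \<le> 0"
    by (rule tendsto_lowerbound) simp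
  then show ?thesis by simp
qed

lemma second_difference_mean_value:
  fixes f :: "'a::real_normed_vector \<Rightarrow> real"
  assumes "ball p d \<subseteq> U"
    and f': "\<And>x. x \<in> U \<Longrightarrow> (f has_derivative f' x) (at x)"
    and f'': "\<And>x v. x \<in> U \<Longrightarrow> ((\<lambda>y. f' y v) has_derivative f'' v x) (at x)"
    and "t > 0" "t * (norm a + norm b) < d"
  shows "\<exists>x\<in>ball p d.
           f (p + t *\<^sub>R a + t *\<^sub>R b) - f (p + t *\<^sub>R a) - f (p + t *\<^sub>R b) + f p = t\<^sup>2 * f'' a x b"
proof -
  have in_ball: "p + s *\<^sub>R a + \<tau> *\<^sub>R b \<in> ball p d" if "0 \<le> s" "s \<le> t" "0 \<le> \<tau>" "\<tau> \<le> t" for s \<tau>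
  proof -
    have "norm (s *\<^sub>R a + \<tau> *\<^sub>R b) \<le> s * norm a + \<tau> * norm b"
      using that norm_triangle_ineq[of "s *\<^sub>R a" "\<tau> *\<^sub>R b"] by simp
    also have "\<dots> \<le> t * (norm a + norm b)"
      using that by (simp add: distrib_left add_mono mult_right_mono)
    finally have "norm (s *\<^sub>R a + \<tau> *\<^sub>R b) < d" using assms(5) by linarith
    then show ?thesis by (metis add.assoc add.right_neutral dist_0_norm dist_add_cancel mem_ball)
  qed
  define g where "g s = f (p + t *\<^sub>R b + s *\<^sub>R a) - f (p + s *\<^sub>R a)" for s
  have g': "DERIV g s :> f' (p + t *\<^sub>R b + s *\<^sub>R a) a - f' (p + s *\<^sub>R a) a" if "0 \<le> s" "s \<le> t" for s
    unfolding g_def using in_ball[of s t] in_ball[of s 0] that \<open>t > 0\<close> assms(1)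
    by (intro DERIV_diff has_field_derivative_along_line f') (auto simp: algebra_simps)
  obtain \<sigma> where \<sigma>: "0 < \<sigma>" "\<sigma> < t"
      and g: "g t - g 0 = t * (f' (p + t *\<^sub>R b + \<sigma> *\<^sub>R a) a - f' (p + \<sigma> *\<^sub>R a) a)"
    using MVT2[OF \<open>t > 0\<close> g'] by auto
  define h where "h \<tau> = f' (p + \<sigma> *\<^sub>R a + \<tau> *\<^sub>R b) a" for \<tau>
  have h': "DERIV h \<tau> :> f'' a (p + \<sigma> *\<^sub>R a + \<tau> *\<^sub>R b) b" if "0 \<le> \<tau>" "\<tau> \<le> t" for \<tau>
    unfolding h_def using in_ball[of \<sigma> \<tau>] that \<sigma> assms(1)
    by (intro has_field_derivative_along_line f'') auto
  obtain \<tau> where \<tau>: "0 < \<tau>" "\<tau> < t" and h: "h t - h 0 = t * f'' a (p + \<sigma> *\<^sub>R a + \<tau> *\<^sub>R b) b"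
    using MVT2[OF \<open>t > 0\<close> h'] by auto
  have "f (p + t *\<^sub>R a + t *\<^sub>R b) - f (p + t *\<^sub>R a) - f (p + t *\<^sub>R b) + f p = g t - g 0"
    by (simp add: g_def algebra_simps)
  also have "\<dots> = t * (h t - h 0)" using g by (simp add: h_def algebra_simps)
  also have "\<dots> = t\<^sup>2 * f'' a (p + \<sigma> *\<^sub>R a + \<tau> *\<^sub>R b) b" using h by (simp add: power2_eq_square)
  finally show ?thesis using in_ball[of \<sigma> \<tau>] \<sigma> \<tau> by auto
qed

lemma second_derivative_symmetric:
  fixes f :: "'a::real_normed_vector \<Rightarrow> real"
  assumes "open U" "p \<in> U"
    and f': "\<And>x. x \<in> U \<Longrightarrow> (f has_derivative f' x) (at x)"
    and f'': "\<And>x v. x \<in> U \<Longrightarrow> ((\<lambda>y. f' y v) has_derivative f'' v x) (at x)"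
    and f''_cont: "\<And>v w. continuous_on U (\<lambda>x. f'' v x w)"
  shows "f'' a p b = f'' b p a"
proof (rule ccontr)
  assume "f'' a p b \<noteq> f'' b p a"
  define e where "e = \<bar>f'' a p b - f'' b p a\<bar> / 2"
  have "e > 0" using \<open>f'' a p b \<noteq> f'' b p a\<close> by (simp add: e_def)
  have near: "\<exists>d>0. \<forall>x. dist x p < d \<longrightarrow> \<bar>f'' v x w - f'' v p w\<bar> < e" for v w
    using f''_cont[of v w] assms(1,2) \<open>e > 0\<close>
    unfolding continuous_on_eq_continuous_at[OF \<open>open U\<close>] continuous_at_eps_delta dist_real_def
    by blast
  obtain d1 d2 d3 where "d1 > 0" "d2 > 0" "d3 > 0" "ball p d3 \<subseteq> U"
    and d1: "\<And>x. dist x p < d1 \<Longrightarrow> \<bar>f'' a x b - f'' a p b\<bar> < e"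
    and d2: "\<And>x. dist x p < d2 \<Longrightarrow> \<bar>f'' b x a - f'' b p a\<bar> < e"
    using near[of a b] near[of b a] open_contains_ball_eq[of U] assms(1,2) by meson
  define d where "d = min d1 (min d2 d3)"
  have "d > 0" "ball p d \<subseteq> U"
    using \<open>d1 > 0\<close> \<open>d2 > 0\<close> \<open>d3 > 0\<close> \<open>ball p d3 \<subseteq> U\<close> by (auto simp: d_def)
  define t where "t = d / (norm a + norm b + 1)"
  have K: "norm a + norm b + 1 > 0"
    using norm_ge_zero[of a] norm_ge_zero[of b] by linarith
  then have "t > 0" using \<open>d > 0\<close> by (simp add: t_def)
  have "t * (norm a + norm b) < t * (norm a + norm b + 1)" using \<open>t > 0\<close> by simp
  also have "\<dots> = d" using K by (simp add: t_def)
  finally have "t * (norm a + norm b) < d" .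
  obtain x y where "x \<in> ball p d" "y \<in> ball p d" and "t\<^sup>2 * f'' a x b = t\<^sup>2 * f'' b y a"
    using second_difference_mean_value[OF \<open>ball p d \<subseteq> U\<close> f' f'' \<open>t > 0\<close> \<open>t * (norm a + norm b) < d\<close>]
      second_difference_mean_value[OF \<open>ball p d \<subseteq> U\<close> f' f'' \<open>t > 0\<close>, of b a]
      \<open>t * (norm a + norm b) < d\<close>
    by (fastforce simp: algebra_simps)
  then have "f'' a x b = f'' b y a" using \<open>t > 0\<close> by simp
  moreover have "\<bar>f'' a x b - f'' a p b\<bar> < e" "\<bar>f'' b y a - f'' b p a\<bar> < e"
    using d1 d2 \<open>x \<in> ball p d\<close> \<open>y \<in> ball p d\<close> by (auto simp: d_def dist_commute)
  ultimately show False unfolding e_def by (simp add: abs_if split: if_splits)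
qed

lemma linear_eq_sum_Basis:
  fixes f :: "'a::euclidean_space \<Rightarrow> real"
  assumes "linear f"
  shows "f v = (\<Sum>b\<in>Basis. (v \<bullet> b) * f b)"
proof -
  have "f v = f (\<Sum>b\<in>Basis. (v \<bullet> b) *\<^sub>R b)" by (simp add: euclidean_representation)
  also have "\<dots> = (\<Sum>b\<in>Basis. (v \<bullet> b) * f b)"
    by (simp add: linear_sum[OF assms] linear_cmul[OF assms] o_def)
  finally show ?thesis .
qed

lemma has_derivative_linear_field_sum_Basis:
  fixes C :: "'b::real_normed_vector \<Rightarrow> 'a::euclidean_space \<Rightarrow> real"
  assumes "open U" "p \<in> U" and C_linear: "\<forall>q\<in>U. linear (C q)"
    and C_differentiable: "\<And>u. (\<lambda>q. C q u) differentiable (at p)"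
    and W_deriv: "(W has_derivative W') (at p)"
  shows "((\<lambda>q. C q (W q)) has_derivative
          (\<lambda>h. \<Sum>b\<in>Basis. (W p \<bullet> b) * frechet_derivative (\<lambda>q. C q b) (at p) h + (W' h \<bullet> b) * C p b))
         (at p)"
proof -
  have "((\<lambda>q. \<Sum>b\<in>Basis. (W q \<bullet> b) * C q b) has_derivative
          (\<lambda>h. \<Sum>b\<in>Basis. (W p \<bullet> b) * frechet_derivative (\<lambda>q. C q b) (at p) h + (W' h \<bullet> b) * C p b))
         (at p)"
    using C_differentiable W_deriv
    by (intro has_derivative_sum has_derivative_mult frechet_derivative_works[THEN iffD1]
        has_derivative_inner_left)
  moreover have "(\<Sum>b\<in>Basis. (W q \<bullet> b) * C q b) = C q (W q)" if "q \<in> U" for q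
    using linear_eq_sum_Basis[of "C q" "W q"] C_linear that by simp
  ultimately show ?thesis
    by (rule has_derivative_transform_within_open[OF _ assms(1,2)])
qed

lemma frechet_derivative_linear_field:
  fixes C :: "'b::real_normed_vector \<Rightarrow> 'a::euclidean_space \<Rightarrow> real"
  assumes "open U" "p \<in> U" "\<forall>q\<in>U. linear (C q)" "\<And>u. (\<lambda>q. C q u) differentiable (at p)"
  shows "frechet_derivative (\<lambda>q. C q v) (at p)
           = (\<lambda>h. \<Sum>b\<in>Basis. (v \<bullet> b) * frechet_derivative (\<lambda>q. C q b) (at p) h)"
proof -
  have "((\<lambda>q. C q v) has_derivative
          (\<lambda>h. \<Sum>b\<in>Basis. (v \<bullet> b) * frechet_derivative (\<lambda>q. C q b) (at p) h)) (at p)"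
    using has_derivative_linear_field_sum_Basis[OF assms has_derivative_const[of v]] by simp
  then show ?thesis by (rule frechet_derivative_at[symmetric])
qed

lemma has_derivative_apply_linear_field:
  fixes C :: "'b::real_normed_vector \<Rightarrow> 'a::euclidean_space \<Rightarrow> real"
  assumes "open U" "p \<in> U" and C_linear: "\<forall>q\<in>U. linear (C q)"
    and "\<And>u. (\<lambda>q. C q u) differentiable (at p)"
    and "(W has_derivative W') (at p)"
  shows "((\<lambda>q. C q (W q)) has_derivative
          (\<lambda>h. C p (W' h) + frechet_derivative (\<lambda>q. C q (W p)) (at p) h)) (at p)"
proof -
  have "(\<Sum>b\<in>Basis. (W p \<bullet> b) * frechet_derivative (\<lambda>q. C q b) (at p) h + (W' h \<bullet> b) * C p b)
      = C p (W' h) + frechet_derivative (\<lambda>q. C q (W p)) (at p) h" for h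
    using linear_eq_sum_Basis[of "C p" "W' h"] C_linear \<open>p \<in> U\<close>
    by (simp add: sum.distrib frechet_derivative_linear_field[OF assms(1-4), of "W p"])
  then show ?thesis using has_derivative_linear_field_sum_Basis[OF assms] by simp
qed

lemma d_form_bilinear:
  fixes B :: "complex ^ 'n \<Rightarrow> complex ^ 'n \<Rightarrow> real"
  assumes "open U" "p \<in> U" "\<forall>q\<in>U. linear (B q)" "\<And>u. (\<lambda>q. B q u) differentiable (at p)"
  shows "linear (d_form B p x)" "linear (\<lambda>x. d_form B p x y)"
proof -
  define F where "F b = frechet_derivative (\<lambda>q. B q b) (at p)" for b
  have F_linear: "linear (F b)" for b
    unfolding F_def using assms(4)[of b] frechet_derivative_works has_derivative_linear by blast
  have d_form_eq:
    "d_form B p x y = (\<Sum>b\<in>Basis. (y \<bullet> b) * F b x) - (\<Sum>b\<in>Basis. (x \<bullet> b) * F b y)" for x y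
    by (simp add: d_form_def F_def frechet_derivative_linear_field[OF assms, of x]
        frechet_derivative_linear_field[OF assms, of y])
  show "linear (d_form B p x)" "linear (\<lambda>x. d_form B p x y)"
    unfolding d_form_eq linear_iff
    by (auto simp: inner_add_left linear_add[OF F_linear] linear_cmul[OF F_linear] sum.distrib
        sum_distrib_left algebra_simps)
qed

lemma linear_cmul_i: "linear cmul_i"
  by (auto simp: linear_iff cmul_i_def vec_eq_iff algebra_simps scaleR_conv_of_real)

lemma cmul_i_cmul_i [simp]: "cmul_i (cmul_i v) = - v"
  by (simp add: cmul_i_def vec_eq_iff)

lemma has_derivative_cmul_i:
  "(W has_derivative W') F \<Longrightarrow> ((\<lambda>q. cmul_i (W q)) has_derivative (\<lambda>h. cmul_i (W' h))) F"
  using linear_cmul_i linear_conv_bounded_linear bounded_linear.has_derivative by blast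

lemma complex_tangent_extension:
  fixes L :: "complex ^ 'n \<Rightarrow> complex ^ 'n \<Rightarrow> real"
  assumes L_linear: "\<forall>q\<in>U. linear (L q)"
    and L_differentiable: "\<And>u. (\<lambda>q. L q u) differentiable (at p)"
    and "L p N \<noteq> 0" "L p v = 0" "L p (cmul_i v) = 0"
  obtains W r where "r > 0" "W p = v" "W differentiable (at p)"
    "\<And>q. q \<in> U \<Longrightarrow> dist q p < r \<Longrightarrow> L q (W q) = 0 \<and> L q (cmul_i (W q)) = 0"
proof -
  define P where "P q = L q N" for q
  define Q where "Q q = L q (cmul_i N)" for q
  define D where "D q = (P q)\<^sup>2 + (Q q)\<^sup>2" for q
  define a where "a q = (P q * L q v + Q q * L q (cmul_i v)) / D q" for q
  define b where "b q = (Q q * L q v - P q * L q (cmul_i v)) / D q" for q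
  (* a q and b q solve the 2x2 system L q (W q) = L q (cmul_i (W q)) = 0, whose determinant
     - D q is nonzero near p *)
  define W where "W q = v - a q *\<^sub>R N - b q *\<^sub>R cmul_i N" for q
  have "isCont P p"
    unfolding P_def using L_differentiable differentiable_imp_continuous_within by blast
  then obtain r where "r > 0" and r: "\<And>q. dist q p < r \<Longrightarrow> \<bar>P q - P p\<bar> < \<bar>P p\<bar>"
    using \<open>L p N \<noteq> 0\<close> unfolding continuous_at_eps_delta P_def dist_real_def
    by (metis zero_less_abs_iff)
  have D_nonzero: "D q \<noteq> 0" if "dist q p < r" for q
    using r[OF that] by (auto simp: D_def add_nonneg_eq_0_iff)
  have "L q (W q) = 0 \<and> L q (cmul_i (W q)) = 0" if "q \<in> U" "dist q p < r" for q
  proof -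
    have lin: "linear (L q)" using L_linear \<open>q \<in> U\<close> by blast
    have D: "D q \<noteq> 0" using D_nonzero \<open>dist q p < r\<close> by blast
    have "L q (W q) = L q v - a q * P q - b q * Q q"
      by (simp add: W_def P_def Q_def linear_diff[OF lin] linear_cmul[OF lin])
    also have "\<dots> = 0" using D by (simp add: a_def b_def D_def field_simps power2_eq_square)
    finally have "L q (W q) = 0" .
    have "cmul_i (W q) = cmul_i v - a q *\<^sub>R cmul_i N + b q *\<^sub>R N"
      by (simp add: W_def linear_diff[OF linear_cmul_i] linear_cmul[OF linear_cmul_i])
    then have "L q (cmul_i (W q)) = L q (cmul_i v) - a q * Q q + b q * P q"
      by (simp add: P_def Q_def linear_diff[OF lin] linear_add[OF lin] linear_cmul[OF lin])
    also have "\<dots> = 0" using D by (simp add: a_def b_def D_def field_simps power2_eq_square)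
    finally show ?thesis using \<open>L q (W q) = 0\<close> by blast
  qed
  moreover have "W p = v" using assms(4,5) by (simp add: W_def a_def b_def)
  moreover have "W differentiable (at p)"
    unfolding W_def a_def b_def D_def P_def Q_def
    using D_nonzero[of p] \<open>r > 0\<close> L_differentiable unfolding D_def P_def Q_def
    by (intro derivative_intros) auto
  ultimately show ?thesis using \<open>r > 0\<close> that by blast
qed

locale complex_levelset_hypersurface =
  fixes \<rho> :: "complex ^ 'n \<Rightarrow> real"
    and \<rho>' :: "complex ^ 'n \<Rightarrow> complex ^ 'n \<Rightarrow> real"
    and \<rho>'' :: "complex ^ 'n \<Rightarrow> complex ^ 'n \<Rightarrow> complex ^ 'n \<Rightarrow> real"
    and U \<Sigma> :: "(complex ^ 'n) set"
  assumes open_U: "open U"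
    and has_derivative_\<rho>: "x \<in> U \<Longrightarrow> (\<rho> has_derivative \<rho>' x) (at x)"
    and has_derivative_\<rho>': "x \<in> U \<Longrightarrow> ((\<lambda>y. \<rho>' y v) has_derivative \<rho>'' v x) (at x)"
    and continuous_on_\<rho>'': "continuous_on U (\<lambda>x. \<rho>'' v x w)"
    and \<Sigma>_eq: "\<Sigma> = {p \<in> U. \<rho> p = 0}"
    and \<Sigma>_regular: "p \<in> \<Sigma> \<Longrightarrow> \<rho>' p \<noteq> (\<lambda>v. 0)"
begin

lemma \<Sigma>_in_U: "p \<in> \<Sigma> \<Longrightarrow> p \<in> U"
  using \<Sigma>_eq by blast

lemma linear_\<rho>': "x \<in> U \<Longrightarrow> linear (\<rho>' x)"
  using has_derivative_\<rho> has_derivative_linear by blast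

lemma tangent_sp_eq: "x \<in> U \<Longrightarrow> tangent_sp \<rho> x = {v. \<rho>' x v = 0}"
  using frechet_derivative_at[OF has_derivative_\<rho>] by (simp add: tangent_sp_def)

lemma cx_tangent_iff: "x \<in> U \<Longrightarrow> v \<in> cx_tangent \<rho> x \<longleftrightarrow> \<rho>' x v = 0 \<and> \<rho>' x (cmul_i v) = 0"
  by (simp add: cx_tangent_def tangent_sp_eq)

lemma frechet_derivative_\<rho>': "x \<in> U \<Longrightarrow> frechet_derivative (\<lambda>y. \<rho>' y v) (at x) = \<rho>'' v x"
  using frechet_derivative_at[OF has_derivative_\<rho>'] by simp

lemma differentiable_\<rho>': "x \<in> U \<Longrightarrow> (\<lambda>y. \<rho>' y v) differentiable (at x)"
  using has_derivative_\<rho>' differentiable_def by blast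

lemma \<rho>''_symmetric: "x \<in> U \<Longrightarrow> \<rho>'' a x b = \<rho>'' b x a"
  using second_derivative_symmetric[OF open_U _ has_derivative_\<rho> has_derivative_\<rho>'
      continuous_on_\<rho>''] by blast

lemma tangent_derivative_of_constant_pairing:
  fixes C :: "complex ^ 'n \<Rightarrow> complex ^ 'n \<Rightarrow> real"
  assumes "p \<in> \<Sigma>" and C_linear: "\<forall>q\<in>U. linear (C q)"
    and C_differentiable: "\<And>u. (\<lambda>q. C q u) differentiable (at p)"
    and W_deriv: "(W has_derivative W') (at p)"
    and "v \<in> tangent_sp \<rho> p" "r > 0"
    and C_W_const: "\<And>q. q \<in> \<Sigma> \<Longrightarrow> dist q p < r \<Longrightarrow> C q (W q) = C p (W p)"
  shows "C p (W' v) + frechet_derivative (\<lambda>q. C q (W p)) (at p) v = 0"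
proof -
  have "p \<in> U" "\<rho> p = 0" using \<open>p \<in> \<Sigma>\<close> \<Sigma>_eq by auto
  obtain N where "\<rho>' p N \<noteq> 0" using \<Sigma>_regular[OF \<open>p \<in> \<Sigma>\<close>] by blast
  have "continuous_on U \<rho>"
    using has_derivative_\<rho> by (auto intro: has_derivative_continuous_on has_derivative_at_withinI)
  then show ?thesis
    using constant_on_level_set_derivative_zero[OF open_U \<open>p \<in> U\<close> _ \<open>\<rho> p = 0\<close>
        has_derivative_\<rho>[OF \<open>p \<in> U\<close>] _ \<open>\<rho>' p N \<noteq> 0\<close>
        has_derivative_apply_linear_field[OF open_U \<open>p \<in> U\<close> C_linear C_differentiable W_deriv]
        \<open>r > 0\<close>]
      \<open>v \<in> tangent_sp \<rho> p\<close> C_W_const \<Sigma>_eq tangent_sp_eq[OF \<open>p \<in> U\<close>]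
    by auto
qed

lemma cx_tangent_extension:
  assumes "p \<in> \<Sigma>" "v \<in> cx_tangent \<rho> p"
  obtains W W' r where "r > 0" "W p = v" "(W has_derivative W') (at p)"
    "\<And>q. q \<in> \<Sigma> \<Longrightarrow> dist q p < r \<Longrightarrow> W q \<in> cx_tangent \<rho> q"
proof -
  have "p \<in> U" using \<open>p \<in> \<Sigma>\<close> by (rule \<Sigma>_in_U)
  obtain N where "\<rho>' p N \<noteq> 0" using \<Sigma>_regular[OF \<open>p \<in> \<Sigma>\<close>] by blast
  moreover have "\<rho>' p v = 0" "\<rho>' p (cmul_i v) = 0"
    using \<open>v \<in> cx_tangent \<rho> p\<close> cx_tangent_iff[OF \<open>p \<in> U\<close>] by auto
  ultimately obtain W r where "r > 0" "W p = v" "W differentiable (at p)"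
      and W: "\<And>q. q \<in> U \<Longrightarrow> dist q p < r \<Longrightarrow> \<rho>' q (W q) = 0 \<and> \<rho>' q (cmul_i (W q)) = 0"
    using complex_tangent_extension[of U \<rho>' p N v] linear_\<rho>' differentiable_\<rho>'[OF \<open>p \<in> U\<close>]
    by blast
  then show ?thesis
    using that[of r W] cx_tangent_iff \<Sigma>_in_U by (auto simp: differentiable_def)
qed

end

locale holomorphic_contact_hypersurface = complex_levelset_hypersurface \<rho> \<rho>' \<rho>'' U \<Sigma>
  for \<rho> :: "complex ^ 'n \<Rightarrow> real" and \<rho>' \<rho>'' U \<Sigma> +
  fixes B :: "complex ^ 'n \<Rightarrow> complex ^ 'n \<Rightarrow> real"
    and Z :: "complex ^ 'n \<Rightarrow> complex ^ 'n"
  assumes linear_B: "\<forall>p\<in>U. linear (B p)"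
    and differentiable_B: "p \<in> U \<Longrightarrow> (\<lambda>q. B q v) differentiable (at p)"
    and iZ_tangent: "p \<in> \<Sigma> \<Longrightarrow> cmul_i (Z p) \<in> tangent_sp \<rho> p"
    and kernel_B: "p \<in> \<Sigma> \<Longrightarrow> v \<in> tangent_sp \<rho> p \<Longrightarrow> B p v = 0 \<longleftrightarrow> v \<in> cx_tangent \<rho> p"
    and B_iZ: "p \<in> \<Sigma> \<Longrightarrow> B p (cmul_i (Z p)) = 1"
    and holomorphic_Z: "holomorphic_vf U Z"
begin

(* The vector below is the Lie bracket [iZ, W] at p. Differentiating rho' (W) = rho' (iW) =
   rho' (iZ) = 0 along the hypersurface and using the symmetry of the Hessian and
   Z' (iv) = i Z' (v) shows that both it and its multiple by i are tangent. *)
lemma bracket_with_iZ_in_cx_tangent: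
  assumes "p \<in> \<Sigma>" and W_deriv: "(W has_derivative W') (at p)" and "W p = v" "r > 0"
    and W_cx_tangent: "\<And>q. q \<in> \<Sigma> \<Longrightarrow> dist q p < r \<Longrightarrow> W q \<in> cx_tangent \<rho> q"
  shows "W' (cmul_i (Z p)) - cmul_i (frechet_derivative Z (at p) v) \<in> cx_tangent \<rho> p"
proof -
  have "p \<in> U" using \<open>p \<in> \<Sigma>\<close> by (rule \<Sigma>_in_U)
  define X where "X = cmul_i (Z p)"
  define Z' where "Z' = frechet_derivative Z (at p)"
  have Z_deriv: "(Z has_derivative Z') (at p)" and Z'_cmul_i: "Z' (cmul_i u) = cmul_i (Z' u)" for u
    using holomorphic_Z \<open>p \<in> U\<close> frechet_derivative_works
    unfolding holomorphic_vf_def Z'_def by blast+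
  have "X \<in> tangent_sp \<rho> p" "v \<in> tangent_sp \<rho> p" "cmul_i v \<in> tangent_sp \<rho> p"
    using iZ_tangent[OF \<open>p \<in> \<Sigma>\<close>] W_cx_tangent[OF \<open>p \<in> \<Sigma>\<close>] \<open>W p = v\<close> \<open>r > 0\<close>
    by (auto simp: X_def cx_tangent_def)
  have "\<forall>q\<in>U. linear (\<rho>' q)" using linear_\<rho>' by blast
  note pairing =
    tangent_derivative_of_constant_pairing[OF \<open>p \<in> \<Sigma>\<close> this differentiable_\<rho>'[OF \<open>p \<in> U\<close>]]
  have W_const: "\<rho>' q (W q) = \<rho>' p (W p)" "\<rho>' q (cmul_i (W q)) = \<rho>' p (cmul_i (W p))"
    if "q \<in> \<Sigma>" "dist q p < r" for q
    using W_cx_tangent[OF that] W_cx_tangent[OF \<open>p \<in> \<Sigma>\<close>] \<open>r > 0\<close> that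
      cx_tangent_iff \<Sigma>_in_U \<open>p \<in> U\<close> by auto
  have "\<rho>' p (W' X) + \<rho>'' v p X = 0" "\<rho>' p (cmul_i (W' X)) + \<rho>'' (cmul_i v) p X = 0"
    using pairing[OF W_deriv \<open>X \<in> tangent_sp \<rho> p\<close> \<open>r > 0\<close> W_const(1)]
      pairing[OF has_derivative_cmul_i[OF W_deriv] \<open>X \<in> tangent_sp \<rho> p\<close> \<open>r > 0\<close> W_const(2)]
      frechet_derivative_\<rho>'[OF \<open>p \<in> U\<close>] \<open>W p = v\<close> by auto
  moreover have "\<rho>' q (cmul_i (Z q)) = \<rho>' p (cmul_i (Z p))" if "q \<in> \<Sigma>" for q
    using iZ_tangent[OF that] iZ_tangent[OF \<open>p \<in> \<Sigma>\<close>] tangent_sp_eq \<Sigma>_in_U that \<open>p \<in> U\<close>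
    by auto
  then have iZ_pairing: "\<rho>' p (cmul_i (Z' u)) + \<rho>'' X p u = 0" if "u \<in> tangent_sp \<rho> p" for u
    using pairing[OF has_derivative_cmul_i[OF Z_deriv] that \<open>r > 0\<close>]
      frechet_derivative_\<rho>'[OF \<open>p \<in> U\<close>] by (auto simp: X_def)
  ultimately have "W' X - cmul_i (Z' v) \<in> cx_tangent \<rho> p"
    using iZ_pairing[OF \<open>v \<in> tangent_sp \<rho> p\<close>] iZ_pairing[OF \<open>cmul_i v \<in> tangent_sp \<rho> p\<close>]
      \<rho>''_symmetric[OF \<open>p \<in> U\<close>, of v X] \<rho>''_symmetric[OF \<open>p \<in> U\<close>, of "cmul_i v" X]
    by (simp add: cx_tangent_iff[OF \<open>p \<in> U\<close>] linear_diff[OF linear_cmul_i] Z'_cmul_i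
        linear_diff[OF linear_\<rho>'[OF \<open>p \<in> U\<close>]] linear_add[OF linear_\<rho>'[OF \<open>p \<in> U\<close>]]
        linear_neg[OF linear_\<rho>'[OF \<open>p \<in> U\<close>]])
  then show ?thesis by (simp add: X_def Z'_def)
qed

lemma B_vanishes_on_cx_tangent: "p \<in> \<Sigma> \<Longrightarrow> v \<in> cx_tangent \<rho> p \<Longrightarrow> B p v = 0"
  using kernel_B by (auto simp: cx_tangent_def)

lemma d_form_iZ_cx_tangent:
  assumes "p \<in> \<Sigma>" "v \<in> cx_tangent \<rho> p"
  shows "d_form B p (cmul_i (Z p)) v = 0"
proof -
  have "p \<in> U" using \<open>p \<in> \<Sigma>\<close> by (rule \<Sigma>_in_U)
  define X where "X = cmul_i (Z p)"
  define Z' where "Z' = frechet_derivative Z (at p)"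
  have Z_deriv: "(Z has_derivative Z') (at p)"
    using holomorphic_Z \<open>p \<in> U\<close> frechet_derivative_works
    unfolding holomorphic_vf_def Z'_def by blast
  obtain W W' r where "r > 0" "W p = v" and W_deriv: "(W has_derivative W') (at p)"
      and W_cx_tangent: "\<And>q. q \<in> \<Sigma> \<Longrightarrow> dist q p < r \<Longrightarrow> W q \<in> cx_tangent \<rho> q"
    using cx_tangent_extension[OF assms] by blast
  have "X \<in> tangent_sp \<rho> p" "v \<in> tangent_sp \<rho> p"
    using iZ_tangent[OF \<open>p \<in> \<Sigma>\<close>] \<open>v \<in> cx_tangent \<rho> p\<close> by (auto simp: X_def cx_tangent_def)
  note pairing = tangent_derivative_of_constant_pairing[where C = B, OF \<open>p \<in> \<Sigma>\<close>
      linear_B differentiable_B[OF \<open>p \<in> U\<close>]]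
  have "B p (W' X) + frechet_derivative (\<lambda>q. B q v) (at p) X = 0"
    using pairing[OF W_deriv \<open>X \<in> tangent_sp \<rho> p\<close> \<open>r > 0\<close>] W_cx_tangent \<open>W p = v\<close>
      B_vanishes_on_cx_tangent \<open>p \<in> \<Sigma>\<close> \<open>v \<in> cx_tangent \<rho> p\<close> by auto
  moreover have "B p (cmul_i (Z' v)) + frechet_derivative (\<lambda>q. B q X) (at p) v = 0"
    using pairing[OF has_derivative_cmul_i[OF Z_deriv] \<open>v \<in> tangent_sp \<rho> p\<close> \<open>r > 0\<close>]
      B_iZ \<open>p \<in> \<Sigma>\<close> by (auto simp: X_def)
  moreover have "B p (W' X - cmul_i (Z' v)) = 0"
    using bracket_with_iZ_in_cx_tangent[OF \<open>p \<in> \<Sigma>\<close> W_deriv \<open>W p = v\<close> \<open>r > 0\<close> W_cx_tangent]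
      B_vanishes_on_cx_tangent[OF \<open>p \<in> \<Sigma>\<close>] by (simp add: X_def Z'_def)
  ultimately show ?thesis
    by (simp add: d_form_def X_def linear_diff[OF bspec[OF linear_B \<open>p \<in> U\<close>]])
qed

lemma d_form_iZ_tangent:
  assumes "p \<in> \<Sigma>" "u \<in> tangent_sp \<rho> p"
  shows "d_form B p (cmul_i (Z p)) u = 0"
proof -
  have "p \<in> U" using \<open>p \<in> \<Sigma>\<close> by (rule \<Sigma>_in_U)
  define X where "X = cmul_i (Z p)"
  define w where "w = u - B p u *\<^sub>R X"
  have lin: "linear (\<rho>' p)" "linear (B p)" using linear_\<rho>' linear_B \<open>p \<in> U\<close> by auto
  have "X \<in> tangent_sp \<rho> p" using iZ_tangent[OF \<open>p \<in> \<Sigma>\<close>] by (simp add: X_def)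
  then have "w \<in> tangent_sp \<rho> p"
    using \<open>u \<in> tangent_sp \<rho> p\<close>
    by (simp add: tangent_sp_eq[OF \<open>p \<in> U\<close>] w_def linear_diff[OF lin(1)] linear_cmul[OF lin(1)])
  moreover have "B p w = 0"
    using B_iZ[OF \<open>p \<in> \<Sigma>\<close>] by (simp add: w_def X_def linear_diff[OF lin(2)] linear_cmul[OF lin(2)])
  ultimately have "w \<in> cx_tangent \<rho> p" using kernel_B[OF \<open>p \<in> \<Sigma>\<close>] by blast
  have "d_form B p X u = B p u * d_form B p X X + d_form B p X w"
    using d_form_bilinear(1)[OF open_U \<open>p \<in> U\<close> linear_B differentiable_B[OF \<open>p \<in> U\<close>], of X]
    by (simp add: w_def linear_diff linear_cmul)
  also have "\<dots> = 0"
    using d_form_iZ_cx_tangent[OF \<open>p \<in> \<Sigma>\<close> \<open>w \<in> cx_tangent \<rho> p\<close>] by (simp add: d_form_def X_def)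
  finally show ?thesis by (simp add: X_def)
qed

lemma reeb_at_iZ: "p \<in> \<Sigma> \<Longrightarrow> reeb_at \<rho> B p (cmul_i (Z p))"
  using iZ_tangent B_iZ d_form_iZ_tangent by (simp add: reeb_at_def)

lemma reeb_at_unique:
  assumes "p \<in> \<Sigma>" "reeb_at \<rho> B p R"
    and strictly_convex: "\<forall>v\<in>cx_tangent \<rho> p. v \<noteq> 0 \<longrightarrow> d_form B p v (cmul_i v) > 0"
  shows "R = cmul_i (Z p)"
proof -
  have "p \<in> U" using \<open>p \<in> \<Sigma>\<close> by (rule \<Sigma>_in_U)
  define w where "w = R - cmul_i (Z p)"
  have lin: "linear (\<rho>' p)" "linear (B p)" using linear_\<rho>' linear_B \<open>p \<in> U\<close> by auto
  have "w \<in> tangent_sp \<rho> p" "B p w = 0"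
    using \<open>reeb_at \<rho> B p R\<close> iZ_tangent[OF \<open>p \<in> \<Sigma>\<close>] B_iZ[OF \<open>p \<in> \<Sigma>\<close>]
    by (simp_all add: reeb_at_def tangent_sp_eq[OF \<open>p \<in> U\<close>] w_def linear_diff[OF lin(1)]
        linear_diff[OF lin(2)])
  then have "w \<in> cx_tangent \<rho> p" using kernel_B[OF \<open>p \<in> \<Sigma>\<close>] by blast
  then have "cmul_i w \<in> tangent_sp \<rho> p" by (simp add: cx_tangent_def)
  have "d_form B p w (cmul_i w) = d_form B p R (cmul_i w) - d_form B p (cmul_i (Z p)) (cmul_i w)"
    using linear_diff[OF d_form_bilinear(2)[OF open_U \<open>p \<in> U\<close> linear_B
        differentiable_B[OF \<open>p \<in> U\<close>], of "cmul_i w"]]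
    by (simp add: w_def)
  also have "\<dots> = 0"
    using \<open>reeb_at \<rho> B p R\<close> \<open>cmul_i w \<in> tangent_sp \<rho> p\<close>
      d_form_iZ_tangent[OF \<open>p \<in> \<Sigma>\<close> \<open>cmul_i w \<in> tangent_sp \<rho> p\<close>]
    by (simp add: reeb_at_def)
  finally have "w = 0" using strictly_convex \<open>w \<in> cx_tangent \<rho> p\<close> by force
  then show ?thesis by (simp add: w_def)
qed

end

lemma smooth_on_second_derivatives:
  assumes "smooth_on U f"
  obtains f' f'' where "\<And>x. x \<in> U \<Longrightarrow> (f has_derivative f' x) (at x)"
    "\<And>x v. x \<in> U \<Longrightarrow> ((\<lambda>y. f' y v) has_derivative f'' v x) (at x)"
    "\<And>v w. continuous_on U (\<lambda>x. f'' v x w)"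
proof -
  have "Ck_on 2 U f" using assms by (simp add: smooth_on_def)
  then obtain f' where "\<forall>x\<in>U. (f has_derivative f' x) (at x)"
      and "\<forall>v. \<exists>g. (\<forall>x\<in>U. ((\<lambda>x. f' x v) has_derivative g x) (at x)) \<and>
                 (\<forall>w. continuous_on U (\<lambda>x. g x w))"
    by (auto simp: numeral_2_eq_2)
  then obtain f'' where "\<forall>v. (\<forall>x\<in>U. ((\<lambda>x. f' x v) has_derivative f'' v x) (at x)) \<and>
      (\<forall>w. continuous_on U (\<lambda>x. f'' v x w))"
    by metis
  then show ?thesis using that \<open>\<forall>x\<in>U. (f has_derivative f' x) (at x)\<close> by blast
qed

lemma smooth_on_differentiable: "smooth_on U f \<Longrightarrow> x \<in> U \<Longrightarrow> f differentiable (at x)"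
  unfolding smooth_on_def by (metis Ck_on.simps(2) differentiable_def)

theorem mainTheorem6:
  fixes \<rho> :: "complex ^ 'n \<Rightarrow> real"
    and Z :: "complex ^ 'n \<Rightarrow> complex ^ 'n"
    and B :: "complex ^ 'n \<Rightarrow> complex ^ 'n \<Rightarrow> real"
    and U D \<Sigma> :: "(complex ^ 'n) set"
  assumes U_open: "open U"
    and \<rho>_smooth: "smooth_on U \<rho>"
    and \<Sigma>_def: "\<Sigma> = {p \<in> U. \<rho> p = 0}"
    and \<Sigma>_regular: "\<forall>p\<in>\<Sigma>. frechet_derivative \<rho> (at p) \<noteq> (\<lambda>v. 0)"
    and D_compact: "compact D"
    and \<Sigma>_boundary: "frontier D = \<Sigma>"
    and Z_smooth: "smooth_on U Z"
    and iZ_tangent: "\<forall>p\<in>\<Sigma>. cmul_i (Z p) \<in> tangent_sp \<rho> p"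
    and B_linear: "\<forall>p\<in>U. linear (B p)"
    and B_smooth: "\<forall>v. smooth_on U (\<lambda>p. B p v)"
    and \<beta>_kernel: "\<forall>p\<in>\<Sigma>. \<forall>v\<in>tangent_sp \<rho> p. B p v = 0 \<longleftrightarrow> v \<in> cx_tangent \<rho> p"
    and \<beta>_iZ: "\<forall>p\<in>\<Sigma>. B p (cmul_i (Z p)) = 1"
    and strictly_i_convex:
      "\<forall>p\<in>\<Sigma>. \<forall>v\<in>cx_tangent \<rho> p. v \<noteq> 0 \<longrightarrow> d_form B p v (cmul_i v) > 0"
    and Z_holo: "holomorphic_vf U Z"
  shows "(\<forall>p\<in>\<Sigma>. reeb_at \<rho> B p (cmul_i (Z p))) \<and>
         (\<forall>R. (\<forall>p\<in>\<Sigma>. reeb_at \<rho> B p (R p)) \<longrightarrow> (\<forall>p\<in>\<Sigma>. R p = cmul_i (Z p)))"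
proof -
  obtain \<rho>' \<rho>'' where \<rho>': "\<And>x. x \<in> U \<Longrightarrow> (\<rho> has_derivative \<rho>' x) (at x)"
    and \<rho>'': "\<And>x v. x \<in> U \<Longrightarrow> ((\<lambda>y. \<rho>' y v) has_derivative \<rho>'' v x) (at x)"
    and \<rho>''_cont: "\<And>v w. continuous_on U (\<lambda>x. \<rho>'' v x w)"
    by (rule smooth_on_second_derivatives[OF \<rho>_smooth]) blast
  interpret holomorphic_contact_hypersurface \<rho> \<rho>' \<rho>'' U \<Sigma> B Z
  proof
    show "\<rho>' p \<noteq> (\<lambda>v. 0)" if "p \<in> \<Sigma>" for p
      using \<Sigma>_regular that frechet_derivative_at[OF \<rho>'] \<Sigma>_def by auto
    show "(\<lambda>q. B q v) differentiable (at p)" if "p \<in> U" for p v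
      using smooth_on_differentiable[OF B_smooth[rule_format] that] .
  qed (use assms \<rho>' \<rho>'' \<rho>''_cont in auto)
  show ?thesis
    using reeb_at_iZ reeb_at_unique strictly_i_convex by blast
qed

end
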